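(* Fix an integer $b\ge2$ and $\gamma\in(0,1)$. Let $\phi$ be a real analytic $\mathbb{Z}$-periodic function satisfying condition (H), and assume $\alpha<\min\{1,\frac{\log b}{\log(1/\gamma)}\}$. Then for any $t_0>0$ there exist an integer $t>t_0$, a real number $\Delta_1>0$ and words $\mathbf{h},\mathbf{h}',\mathbf{a}\in\Lambda^t$ such that for every $z\in I_{\mathbf{a}}$ and all $\mathbf{i},\mathbf{j}\in\Lambda^{\#}$ with $\mathbf{h}$ a prefix of $\mathbf{i}$ and $\mathbf{h}'$ a prefix of $\mathbf{j}$: (A.1) $|S'(z,\mathbf{i})|>\Delta_1$ and $|S'(z,\mathbf{j})|>\Delta_1$; (A.2) $|S'(z,\mathbf{i})-S'(z,\mathbf{j})|>\Delta_1$.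
   Context: $\Lambda=\{0,\dots,b-1\}$, $\Lambda^{\#}=\bigcup_{n\ge1}\Lambda^n$, $\Sigma=\Lambda^{\mathbb{Z}_+}$, $\nu$ uniform on $\Lambda$. For a word $\mathbf{j}$ of length $1\le p\le\infty$ and $x\in[0,1]$, $S(x,\mathbf{j})=\sum_{n=1}^p\gamma^{n-1}\phi\big(\frac{x+j_1+j_2b+\cdots+j_nb^{n-1}}{b^n}\big)$, and $S'(x,\mathbf{j})$ is its derivative in $x$. Condition (H): for all $\mathbf{i}\neq\mathbf{j}\in\Sigma$, $x\mapsto S(x,\mathbf{j})-S(x,\mathbf{i})$ is not identically zero. $\alpha$ is the constant such that for Lebesgue-a.e. $x$, the image $m_x$ of $\nu^{\mathbb{Z}_+}$ under $\mathbf{j}\mapsto S(x,\mathbf{j})$ is exact dimensional with dimension $\alpha$. For $\mathbf{a}=a_1\cdots a_t$, $I_{\mathbf{a}}=\big[\frac{a_1+a_2b+\cdots+a_tb^{t-1}}{b^t},\frac{1+a_1+a_2b+\cdots+a_tb^{t-1}}{b^t}\big)$. *)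

theory Defs
  imports "HOL-Probability.Probability"
begin

text \<open>Alphabet Lambda = {0,...,b-1}; finite words are lists over Lambda,
  infinite words (elements of Sigma) are functions nat => nat with values in Lambda
  (index 0 is the first letter j_1).\<close>

definition word_ok :: "nat \<Rightarrow> nat list \<Rightarrow> bool" where
  "word_ok b w \<longleftrightarrow> (\<forall>k\<in>set w. k < b)"

definition seq_ok :: "nat \<Rightarrow> (nat \<Rightarrow> nat) \<Rightarrow> bool" where
  "seq_ok b j \<longleftrightarrow> (\<forall>n. j n < b)"

definition S_fin :: "nat \<Rightarrow> real \<Rightarrow> (real \<Rightarrow> real) \<Rightarrow> real \<Rightarrow> nat list \<Rightarrow> real" where
  "S_fin b \<gamma> \<phi> x w =
     (\<Sum>n<length w. \<gamma> ^ n * \<phi> ((x + (\<Sum>k\<le>n. real (w ! k) * real b ^ k)) / real b ^ (n + 1)))"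

definition S_inf :: "nat \<Rightarrow> real \<Rightarrow> (real \<Rightarrow> real) \<Rightarrow> real \<Rightarrow> (nat \<Rightarrow> nat) \<Rightarrow> real" where
  "S_inf b \<gamma> \<phi> x j =
     (\<Sum>n. \<gamma> ^ n * \<phi> ((x + (\<Sum>k\<le>n. real (j k) * real b ^ k)) / real b ^ (n + 1)))"

definition S'_fin :: "nat \<Rightarrow> real \<Rightarrow> (real \<Rightarrow> real) \<Rightarrow> real \<Rightarrow> nat list \<Rightarrow> real" where
  "S'_fin b \<gamma> \<phi> x w = deriv (\<lambda>y. S_fin b \<gamma> \<phi> y w) x"

definition real_analytic :: "(real \<Rightarrow> real) \<Rightarrow> bool" where
  "real_analytic f \<longleftrightarrow>
     (\<forall>x. \<exists>r>0. \<exists>c::nat \<Rightarrow> real. \<forall>y. \<bar>y - x\<bar> < r \<longrightarrow> (\<lambda>n. c n * (y - x) ^ n) sums f y)"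

definition Z_periodic :: "(real \<Rightarrow> real) \<Rightarrow> bool" where
  "Z_periodic f \<longleftrightarrow> (\<forall>x. f (x + 1) = f x)"

definition cond_H :: "nat \<Rightarrow> real \<Rightarrow> (real \<Rightarrow> real) \<Rightarrow> bool" where
  "cond_H b \<gamma> \<phi> \<longleftrightarrow>
     (\<forall>i j. seq_ok b i \<and> seq_ok b j \<and> i \<noteq> j \<longrightarrow>
        (\<exists>x\<in>{0..1}. S_inf b \<gamma> \<phi> x j - S_inf b \<gamma> \<phi> x i \<noteq> 0))"

definition m_meas :: "nat \<Rightarrow> real \<Rightarrow> (real \<Rightarrow> real) \<Rightarrow> real \<Rightarrow> real measure" where
  "m_meas b \<gamma> \<phi> x =
     distr (PiM UNIV (\<lambda>_::nat. uniform_count_measure {..<b})) borel (\<lambda>j. S_inf b \<gamma> \<phi> x j)"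

definition exact_dimensional :: "real measure \<Rightarrow> real \<Rightarrow> bool" where
  "exact_dimensional m d \<longleftrightarrow>
     (AE y in m. ((\<lambda>r. ln (measure m (ball y r)) / ln r) \<longlongrightarrow> d) (at_right 0))"

definition I_word :: "nat \<Rightarrow> nat list \<Rightarrow> real set" where
  "I_word b a = {(\<Sum>k<length a. real (a ! k) * real b ^ k) / real b ^ length a ..<
                 (1 + (\<Sum>k<length a. real (a ! k) * real b ^ k)) / real b ^ length a}"

end

(* For an infinite word k let S'(x,k) be the termwise derivative of S(x,k). Its tail beyond the
   first m letters is O((gamma/b)^m), and prepending m letters w gives the self-similarity
     S'(x, w k) = S'_m(x, w) + (gamma/b)^m S'(y, k),   y = (x + w_1 + ... + w_m b^(m-1)) / b^m.
   Call (m, x, k, k') separating if the truncations S'_m(x,k), S'_m(x,k') and their difference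
   dominate that tail. A separating configuration persists on a small b-adic interval I_a around x
   and for all words beginning with the first t letters of k and k', which gives the claim.
   If no configuration were separating, then at every x the numbers S'(x,k) would take at most one
   non-zero value; by self-similarity S'(y,.) is constant at points y converging to x, hence by
   continuity S'(x,.) is constant and S(x,k) - S(x,k') does not depend on x. Periodicity gives
   S(1,N) = S(0,N+1) for the digit sequence of N, so S(0,N) is bounded and linear in N; therefore
   S(x,1) - S(x,0) vanishes identically, contradicting (H). *)

theory Submission
  imports Defs
begin

lemma suminf_tail_le_geometric:
  fixes f :: "nat \<Rightarrow> real"
  assumes q: "0 \<le> q" "q < 1" and f_le: "\<And>n. \<bar>f n\<bar> \<le> C * q ^ n"
  shows "summable f" and "\<bar>suminf f - (\<Sum>n<m. f n)\<bar> \<le> C * q ^ m / (1 - q)"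
proof -
  have geo: "(\<lambda>n. C * q ^ m * q ^ n) sums (C * q ^ m / (1 - q))"
    using sums_mult[OF geometric_sums, of q "C * q ^ m"] q by simp
  have f_shift_le: "\<bar>f (n + m)\<bar> \<le> C * q ^ m * q ^ n" for n
    using f_le[of "n + m"] by (simp add: power_add mult_ac)
  have abs_shift: "summable (\<lambda>n. \<bar>f (n + m)\<bar>)"
    by (rule summable_comparison_test[OF _ sums_summable[OF geo]]) (use f_shift_le in auto)
  then have "summable (\<lambda>n. f (n + m))"
    by (rule summable_rabs_cancel)
  then show sf: "summable f"
    by (simp add: summable_iff_shift)
  have "suminf f - (\<Sum>n<m. f n) = (\<Sum>n. f (n + m))"
    using suminf_split_initial_segment[OF sf, of m] by simp
  also have "\<bar>\<dots>\<bar> \<le> (\<Sum>n. \<bar>f (n + m)\<bar>)"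
    by (rule summable_rabs[OF abs_shift])
  also have "\<dots> \<le> (\<Sum>n. C * q ^ m * q ^ n)"
    by (rule suminf_le[OF f_shift_le abs_shift sums_summable[OF geo]])
  also have "\<dots> = C * q ^ m / (1 - q)"
    using geo by (rule sums_unique[symmetric])
  finally show "\<bar>suminf f - (\<Sum>n<m. f n)\<bar> \<le> C * q ^ m / (1 - q)" .
qed

lemma bounded_arithmetic_progression:
  fixes c d B :: real
  assumes "\<And>N::nat. \<bar>c + real N * d\<bar> \<le> B"
  shows "d = 0"
proof (rule ccontr)
  assume "d \<noteq> 0"
  obtain N :: nat where "(B + \<bar>c\<bar>) / \<bar>d\<bar> < real N"
    using reals_Archimedean2 by blast
  with \<open>d \<noteq> 0\<close> have "B + \<bar>c\<bar> < real N * \<bar>d\<bar>"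
    by (simp add: divide_less_eq)
  moreover have "real N * \<bar>d\<bar> \<le> \<bar>c + real N * d\<bar> + \<bar>c\<bar>"
    by (simp add: abs_mult)
  ultimately show False
    using assms[of N] by linarith
qed

lemma trichotomy_imp_two_values:
  fixes f :: "'a \<Rightarrow> real"
  assumes "\<And>a a'. a \<in> A \<Longrightarrow> a' \<in> A \<Longrightarrow> f a = 0 \<or> f a' = 0 \<or> f a = f a'"
  obtains v where "\<And>a. a \<in> A \<Longrightarrow> f a = 0 \<or> f a = v"
proof (cases "\<exists>a0\<in>A. f a0 \<noteq> 0")
  case True
  then obtain a0 where "a0 \<in> A" "f a0 \<noteq> 0" by blast
  then show ?thesis
    using that[of "f a0"] assms[of _ a0] by blast
qed (use that in blast)

lemma real_analytic_has_continuous_deriv: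
  assumes "real_analytic f"
  shows "(f has_real_derivative deriv f x) (at x)" and "isCont (deriv f) x"
proof -
  obtain r c where r: "r > 0" and c: "\<And>y. \<bar>y - x\<bar> < r \<Longrightarrow> (\<lambda>n. c n * (y - x) ^ n) sums f y"
    using assms unfolding real_analytic_def by blast
  define P where "P z = (\<Sum>n. c n * z ^ n)" for z :: real
  define P' where "P' z = (\<Sum>n. diffs c n * z ^ n)" for z :: real
  have summable_c: "summable (\<lambda>n. c n * z ^ n)" if "norm z < r" for z :: real
    using c[of "x + z"] that by (auto simp: sums_iff)
  have P_deriv: "(P has_real_derivative P' z) (at z)" if "norm z < r" for z :: real
    unfolding P_def P'_def by (rule termdiffs_strong'[OF summable_c that])
  have P'_cont: "isCont P' z" if "norm z < r" for z :: real
  proof -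
    have "summable (\<lambda>n. diffs c n * ((norm z + r) / 2) ^ n)"
      using that r by (intro termdiff_converges[OF _ summable_c]) auto
    moreover have "norm z < norm ((norm z + r) / 2)"
      using that r by auto
    ultimately show ?thesis
      unfolding P'_def using isCont_powser by blast
  qed
  have f_deriv: "(f has_real_derivative P' (y - x)) (at y)" if "y \<in> ball x r" for y
  proof (rule has_field_derivative_transform_within_open[OF _ open_ball that])
    have "((\<lambda>y. P (y - x)) has_real_derivative P' (y - x) * 1) (at y)"
      by (rule DERIV_chain2[OF P_deriv]) (use that in \<open>auto intro!: derivative_eq_intros simp: dist_real_def\<close>)
    then show "((\<lambda>y. P (y - x)) has_real_derivative P' (y - x)) (at y)"
      by simp
    show "P (z - x) = f z" if "z \<in> ball x r" for z
      using c[of z] that unfolding P_def by (simp add: sums_iff dist_real_def abs_minus_commute)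
  qed
  have deriv_eq: "\<forall>\<^sub>F y in nhds x. deriv f y = P' (y - x)"
    using r by (intro eventually_nhds_in_open[of "ball x r", THEN eventually_mono])
      (auto intro: DERIV_imp_deriv[OF f_deriv])
  show "(f has_real_derivative deriv f x) (at x)"
    using f_deriv[of x] DERIV_imp_deriv[OF f_deriv, of x] r by simp
  have "isCont (\<lambda>y. P' (y - x)) x"
    by (rule isCont_o2[OF _ P'_cont]) (use r in \<open>auto intro!: continuous_intros\<close>)
  then show "isCont (deriv f) x"
    using isCont_cong[OF deriv_eq] by blast
qed

section \<open>Digit expansions\<close>

definition digit :: "nat \<Rightarrow> nat \<Rightarrow> nat \<Rightarrow> nat" where
  "digit b N j = N div b ^ j mod b"

lemma seq_ok_digit: "0 < b \<Longrightarrow> seq_ok b (digit b N)"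
  by (simp add: seq_ok_def digit_def)

lemma sum_digit: "(\<Sum>j<m. real (digit b N j) * real b ^ j) = real (N mod b ^ m)"
proof -
  have "(\<Sum>j<m. digit b N j * b ^ j) = N mod b ^ m"
  proof (induction m)
    case (Suc m)
    have "N mod b ^ Suc m = b ^ m * (N div b ^ m mod b) + N mod b ^ m"
      using mod_mult2_eq[of N "b ^ m" b] by (simp add: mult.commute)
    then show ?case
      using Suc by (simp add: digit_def mult.commute)
  qed simp
  then show ?thesis
    by (metis (no_types, lifting) of_nat_mult of_nat_power of_nat_sum sum.cong)
qed

lemma digit_expansion_bounds:
  assumes "seq_ok b k"
  shows "0 \<le> (\<Sum>j<m. real (k j) * real b ^ j)" and "(\<Sum>j<m. real (k j) * real b ^ j) \<le> real b ^ m - 1"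
proof -
  show "0 \<le> (\<Sum>j<m. real (k j) * real b ^ j)"
    by (intro sum_nonneg) auto
  have "real (k j) \<le> real b - 1" for j
    using assms by (simp add: seq_ok_def) (metis Suc_leI of_nat_Suc of_nat_le_iff le_diff_eq add.commute)
  then have "(\<Sum>j<m. real (k j) * real b ^ j) \<le> (\<Sum>j<m. (real b - 1) * real b ^ j)"
    by (intro sum_mono mult_right_mono) auto
  also have "\<dots> = real b ^ m - 1"
    by (induction m) (simp_all add: algebra_simps)
  finally show "(\<Sum>j<m. real (k j) * real b ^ j) \<le> real b ^ m - 1" .
qed

lemma floor_scaled_bounds:
  fixes x :: real and b m :: nat
  assumes "0 \<le> x" "x < 1" "0 < b"
  defines "N \<equiv> nat \<lfloor>x * real b ^ m\<rfloor>"
  shows "N < b ^ m" and "real N \<le> x * real b ^ m" and "x * real b ^ m < real N + 1"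
proof -
  have "0 \<le> x * real b ^ m"
    using assms by simp
  then show lower: "real N \<le> x * real b ^ m" and upper: "x * real b ^ m < real N + 1"
    unfolding N_def by linarith+
  have "x * real b ^ m < real b ^ m"
    using assms by simp
  with lower show "N < b ^ m"
    by (metis of_nat_less_iff of_nat_power order_le_less_trans)
qed

definition word_seq :: "nat list \<Rightarrow> nat \<Rightarrow> nat" where
  "word_seq i j = (if j < length i then i ! j else 0)"

lemma seq_ok_word_seq: "0 < b \<Longrightarrow> word_ok b i \<Longrightarrow> seq_ok b (word_seq i)"
  by (auto simp: word_ok_def seq_ok_def word_seq_def)

lemma word_seq_prefix: "prefix (map k [0..<t]) i \<Longrightarrow> j < t \<Longrightarrow> word_seq i j = k j"
  by (auto simp: prefix_def word_seq_def nth_append)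

lemma I_word_floor_digits:
  fixes x :: real and b t :: nat
  assumes x: "0 \<le> x" "x < 1" and b: "0 < b"
  defines "a \<equiv> map (digit b (nat \<lfloor>x * real b ^ t\<rfloor>)) [0..<t]"
  shows "length a = t" and "word_ok b a"
    and "\<And>z. z \<in> I_word b a \<Longrightarrow> z \<in> {0..1} \<and> \<bar>z - x\<bar> < 1 / real b ^ t"
proof -
  define N where "N = nat \<lfloor>x * real b ^ t\<rfloor>"
  have N: "N < b ^ t" "real N \<le> x * real b ^ t" "x * real b ^ t < real N + 1"
    using floor_scaled_bounds[OF x b] unfolding N_def by auto
  show "length a = t"
    by (simp add: a_def)
  show "word_ok b a"
    using b by (auto simp: word_ok_def a_def digit_def)
  have "(\<Sum>j<length a. real (a ! j) * real b ^ j) = (\<Sum>j<t. real (digit b N j) * real b ^ j)"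
    unfolding a_def N_def by (intro sum.cong) auto
  also have "\<dots> = real N"
    using N(1) by (simp add: sum_digit)
  finally have I: "I_word b a = {real N / real b ^ t ..< (1 + real N) / real b ^ t}"
    unfolding I_word_def by (simp add: a_def)
  have N_succ: "real N + 1 \<le> real b ^ t"
    using N(1) by (metis Suc_leI add.commute of_nat_Suc of_nat_le_iff of_nat_power)
  have B: "0 < real b ^ t"
    using b by simp
  show "z \<in> {0..1} \<and> \<bar>z - x\<bar> < 1 / real b ^ t" if "z \<in> I_word b a" for z
  proof -
    have "real N \<le> z * real b ^ t" "z * real b ^ t < real N + 1"
      using that b unfolding I by (simp_all add: field_simps)
    then have "0 \<le> z * real b ^ t" "z * real b ^ t \<le> 1 * real b ^ t"
      and "\<bar>z * real b ^ t - x * real b ^ t\<bar> < 1"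
      using N N_succ unfolding abs_less_iff by linarith+
    moreover have "\<bar>z * real b ^ t - x * real b ^ t\<bar> = \<bar>z - x\<bar> * real b ^ t"
      using B by (simp add: left_diff_distrib[symmetric] abs_mult)
    ultimately show ?thesis
      using B by (simp add: zero_le_mult_iff mult_le_cancel_right_pos pos_less_divide_eq)
  qed
qed

lemma exists_fine_scale:
  fixes b :: nat and \<epsilon> t\<^sub>0 :: real
  assumes "2 \<le> b" "0 < \<epsilon>"
  obtains t where "m \<le> t" "t\<^sub>0 < real t" "1 / real b ^ t < \<epsilon>"
proof -
  have "(\<lambda>t. (1 / real b) ^ t) \<longlonglongrightarrow> 0"
    using assms by (intro LIMSEQ_power_zero) simp
  from order_tendstoD(2)[OF this \<open>0 < \<epsilon>\<close>] obtain T where T: "\<And>t. T \<le> t \<Longrightarrow> (1 / real b) ^ t < \<epsilon>"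
    unfolding eventually_sequentially by blast
  define t where "t = max (max m T) (nat \<lceil>t\<^sub>0\<rceil> + 1)"
  have "m \<le> t" "t\<^sub>0 < real t" "1 / real b ^ t < \<epsilon>"
    using T[of t] unfolding t_def by (auto simp: power_one_over) linarith
  then show ?thesis
    by (rule that)
qed

section \<open>The derivative series\<close>

locale weierstrass_type_function =
  fixes b :: nat and \<gamma> :: real and \<phi> \<psi> :: "real \<Rightarrow> real" and M\<^sub>0 M\<^sub>1 :: real
  assumes b_ge_2: "2 \<le> b" and \<gamma>_pos: "0 < \<gamma>" and \<gamma>_less_1: "\<gamma> < 1"
    and \<phi>_deriv: "\<And>x. (\<phi> has_real_derivative \<psi> x) (at x)"
    and \<psi>_cont: "\<And>x. isCont \<psi> x"
    and \<phi>_periodic: "\<And>x. \<phi> (x + 1) = \<phi> x"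
    and \<phi>_bound: "\<And>x. x \<in> {0..1} \<Longrightarrow> \<bar>\<phi> x\<bar> \<le> M\<^sub>0"
    and \<psi>_bound: "\<And>x. x \<in> {0..1} \<Longrightarrow> \<bar>\<psi> x\<bar> \<le> M\<^sub>1"
begin

definition arg :: "real \<Rightarrow> (nat \<Rightarrow> nat) \<Rightarrow> nat \<Rightarrow> real" where
  "arg x k n = (x + (\<Sum>j\<le>n. real (k j) * real b ^ j)) / real b ^ (n + 1)"

definition S_part :: "real \<Rightarrow> (nat \<Rightarrow> nat) \<Rightarrow> nat \<Rightarrow> real" where
  "S_part x k m = (\<Sum>n<m. \<gamma> ^ n * \<phi> (arg x k n))"

definition S'_term :: "real \<Rightarrow> (nat \<Rightarrow> nat) \<Rightarrow> nat \<Rightarrow> real" where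
  "S'_term x k n = \<gamma> ^ n * \<psi> (arg x k n) / real b ^ (n + 1)"

definition S'_part :: "real \<Rightarrow> (nat \<Rightarrow> nat) \<Rightarrow> nat \<Rightarrow> real" where
  "S'_part x k m = (\<Sum>n<m. S'_term x k n)"

definition S'_inf :: "real \<Rightarrow> (nat \<Rightarrow> nat) \<Rightarrow> real" where
  "S'_inf x k = (\<Sum>n. S'_term x k n)"

definition q :: real where
  "q = \<gamma> / real b"

definition prepend :: "nat \<Rightarrow> (nat \<Rightarrow> nat) \<Rightarrow> (nat \<Rightarrow> nat) \<Rightarrow> nat \<Rightarrow> nat" where
  "prepend m w k n = (if n < m then w n else k (n - m))"

(* The inverse branch of x \<mapsto> b^m x mod 1 labelled by the digits w 0, ..., w (m - 1). *)
definition branch :: "real \<Rightarrow> (nat \<Rightarrow> nat) \<Rightarrow> nat \<Rightarrow> real" where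
  "branch x w m = (x + (\<Sum>j<m. real (w j) * real b ^ j)) / real b ^ m"

lemma b_pos: "0 < real b"
  using b_ge_2 by simp

lemma q_pos: "0 < q" and q_less_1: "q < 1"
  using \<gamma>_pos \<gamma>_less_1 b_ge_2 by (simp_all add: q_def)

lemma M\<^sub>1_nonneg: "0 \<le> M\<^sub>1"
  using \<psi>_bound[of 0] by auto

lemma seq_ok_prepend: "seq_ok b w \<Longrightarrow> seq_ok b k \<Longrightarrow> seq_ok b (prepend m w k)"
  by (simp add: seq_ok_def prepend_def)

lemma arg_eq_branch: "arg x k n = branch x k (n + 1)"
  by (simp add: arg_def branch_def lessThan_Suc_atMost)

lemma branch_in_unit: "seq_ok b w \<Longrightarrow> x \<in> {0..1} \<Longrightarrow> branch x w m \<in> {0..1}"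
  using digit_expansion_bounds[of b w m] b_pos by (auto simp: branch_def field_simps)

lemma arg_in_unit: "seq_ok b k \<Longrightarrow> x \<in> {0..1} \<Longrightarrow> arg x k n \<in> {0..1}"
  unfolding arg_eq_branch by (rule branch_in_unit)

lemma S'_term_bound:
  assumes "seq_ok b k" "x \<in> {0..1}"
  shows "\<bar>S'_term x k n\<bar> \<le> M\<^sub>1 / real b * q ^ n"
proof -
  have "\<bar>S'_term x k n\<bar> = \<gamma> ^ n * \<bar>\<psi> (arg x k n)\<bar> / real b ^ (n + 1)"
    using \<gamma>_pos b_pos by (simp add: S'_term_def abs_mult)
  also have "\<dots> \<le> \<gamma> ^ n * M\<^sub>1 / real b ^ (n + 1)"
    using \<gamma>_pos b_pos \<psi>_bound[OF arg_in_unit[OF assms]]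
    by (intro divide_right_mono mult_left_mono) auto
  also have "\<dots> = M\<^sub>1 / real b * q ^ n"
    by (simp add: q_def power_divide field_simps)
  finally show ?thesis .
qed

lemma
  assumes "seq_ok b k" "x \<in> {0..1}"
  shows summable_S'_term: "summable (S'_term x k)"
    and S'_inf_tail: "\<bar>S'_inf x k - S'_part x k m\<bar> \<le> M\<^sub>1 * q ^ m"
proof -
  note tail = suminf_tail_le_geometric[OF less_imp_le[OF q_pos] q_less_1 S'_term_bound[OF assms]]
  show "summable (S'_term x k)"
    by (rule tail(1))
  have "real b * (1 - q) \<ge> 1"
    using b_ge_2 \<gamma>_less_1 b_pos by (simp add: q_def algebra_simps)
  then have "M\<^sub>1 * q ^ m / (real b * (1 - q)) \<le> M\<^sub>1 * q ^ m / 1"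
    using M\<^sub>1_nonneg q_pos by (intro divide_left_mono) auto
  then have "M\<^sub>1 / real b * q ^ m / (1 - q) \<le> M\<^sub>1 * q ^ m"
    by simp
  then show "\<bar>S'_inf x k - S'_part x k m\<bar> \<le> M\<^sub>1 * q ^ m"
    using tail(2)[of m] by (simp add: S'_inf_def S'_part_def)
qed

lemma S'_inf_bound: "seq_ok b k \<Longrightarrow> x \<in> {0..1} \<Longrightarrow> \<bar>S'_inf x k\<bar> \<le> M\<^sub>1"
  using S'_inf_tail[of k x 0] by (simp add: S'_part_def)

lemma S'_part_cong: "(\<And>j. j < m \<Longrightarrow> k j = k' j) \<Longrightarrow> S'_part x k m = S'_part x k' m"
  unfolding S'_part_def S'_term_def arg_def by (intro sum.cong refl) (auto intro!: sum.cong)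

lemma arg_prepend: "arg x (prepend m w k) (n + m) = arg (branch x w m) k n"
proof -
  let ?c = "\<lambda>j. real (prepend m w k j) * real b ^ j"
  have split: "(\<Sum>j<m + l. ?c j) = (\<Sum>j<m. ?c j) + (\<Sum>j<l. ?c (m + j))" for l
    by (induction l) simp_all
  have "(\<Sum>j<m + (n + 1). ?c j)
      = (\<Sum>j<m. real (w j) * real b ^ j) + real b ^ m * (\<Sum>j<n + 1. real (k j) * real b ^ j)"
    unfolding split by (simp add: prepend_def power_add sum_distrib_left distrib_left mult_ac)
  then show ?thesis
    using b_pos unfolding arg_eq_branch branch_def
    by (simp add: field_simps power_add add.commute add.left_commute)
qed

lemma S'_inf_prepend:
  assumes w: "seq_ok b w" and k: "seq_ok b k" and x: "x \<in> {0..1}"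
  shows "S'_inf x (prepend m w k) = S'_part x w m + q ^ m * S'_inf (branch x w m) k"
proof -
  have "S'_inf x (prepend m w k) = (\<Sum>n. S'_term x (prepend m w k) (n + m)) + S'_part x (prepend m w k) m"
    unfolding S'_inf_def S'_part_def
    by (rule suminf_split_initial_segment[OF summable_S'_term[OF seq_ok_prepend[OF w k] x]])
  also have "(\<Sum>n. S'_term x (prepend m w k) (n + m)) = (\<Sum>n. q ^ m * S'_term (branch x w m) k n)"
    unfolding S'_term_def arg_prepend q_def using b_pos by (simp add: field_simps power_add power_divide)
  also have "\<dots> = q ^ m * S'_inf (branch x w m) k"
    unfolding S'_inf_def by (rule suminf_mult[OF summable_S'_term[OF k branch_in_unit[OF w x]]])
  also have "S'_part x (prepend m w k) m = S'_part x w m"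
    by (rule S'_part_cong) (simp add: prepend_def)
  finally show ?thesis
    by simp
qed

lemma isCont_S'_part: "isCont (\<lambda>x. S'_part x k m) x"
  unfolding S'_part_def S'_term_def arg_def
  by (intro continuous_intros isCont_o2[OF _ \<psi>_cont]) (use b_pos in auto)

lemma continuous_on_S'_inf: "seq_ok b k \<Longrightarrow> continuous_on {0..1} (\<lambda>x. S'_inf x k)"
proof (rule uniform_limit_theorem)
  assume "seq_ok b k"
  then show "uniform_limit {0..1} (\<lambda>m x. S'_part x k m) (\<lambda>x. S'_inf x k) sequentially"
    unfolding S'_part_def S'_inf_def
    by (intro Weierstrass_m_test[where M = "\<lambda>n. M\<^sub>1 / real b * q ^ n"] summable_mult summable_geometric)
      (use S'_term_bound q_pos q_less_1 in auto)
  show "\<forall>\<^sub>F m in sequentially. continuous_on {0..1} (\<lambda>x. S'_part x k m)"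
    by (intro always_eventually allI continuous_at_imp_continuous_on ballI isCont_S'_part)
qed simp

lemma S_term_has_derivative:
  "((\<lambda>x. \<gamma> ^ n * \<phi> (arg x k n)) has_real_derivative S'_term x k n) (at x)"
proof -
  have "((\<lambda>x. arg x k n) has_real_derivative 1 / real b ^ (n + 1)) (at x)"
    unfolding arg_def using b_pos by (auto intro!: derivative_eq_intros)
  from DERIV_cmult[OF DERIV_chain2[OF \<phi>_deriv this], of "\<gamma> ^ n"] show ?thesis
    by (simp add: S'_term_def)
qed

lemma S_part_has_derivative: "((\<lambda>x. S_part x k m) has_real_derivative S'_part x k m) (at x)"
  unfolding S_part_def S'_part_def by (intro DERIV_sum S_term_has_derivative)

lemma S_inf_eq_suminf: "S_inf b \<gamma> \<phi> x k = (\<Sum>n. \<gamma> ^ n * \<phi> (arg x k n))"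
  by (simp add: S_inf_def arg_def)

lemma
  assumes "seq_ok b k" "x \<in> {0..1}"
  shows summable_S_term: "summable (\<lambda>n. \<gamma> ^ n * \<phi> (arg x k n))"
    and S_inf_bound: "\<bar>S_inf b \<gamma> \<phi> x k\<bar> \<le> M\<^sub>0 / (1 - \<gamma>)"
proof -
  have "\<bar>\<gamma> ^ n * \<phi> (arg x k n)\<bar> \<le> M\<^sub>0 * \<gamma> ^ n" for n
    using \<gamma>_pos \<phi>_bound[OF arg_in_unit[OF assms]] by (simp add: abs_mult mult_left_mono mult.commute)
  note tail = suminf_tail_le_geometric[OF less_imp_le[OF \<gamma>_pos] \<gamma>_less_1 this]
  show "summable (\<lambda>n. \<gamma> ^ n * \<phi> (arg x k n))"
    by (rule tail(1))
  show "\<bar>S_inf b \<gamma> \<phi> x k\<bar> \<le> M\<^sub>0 / (1 - \<gamma>)"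
    using tail(2)[of 0] by (simp add: S_inf_eq_suminf)
qed

lemma S_inf_has_derivative:
  assumes k: "seq_ok b k" and x: "x \<in> {0..1}"
  shows "((\<lambda>x. S_inf b \<gamma> \<phi> x k) has_real_derivative S'_inf x k) (at x within {0..1})"
proof -
  have uniform: "uniform_limit {0..1} (\<lambda>m x. \<Sum>n<m. S'_term x k n) (\<lambda>x. S'_inf x k) sequentially"
    unfolding S'_inf_def
    by (intro Weierstrass_m_test[where M = "\<lambda>n. M\<^sub>1 / real b * q ^ n"] summable_mult summable_geometric)
      (use S'_term_bound[OF k] q_pos q_less_1 in auto)
  obtain g where g: "\<forall>x\<in>{0..1}. (\<lambda>n. \<gamma> ^ n * \<phi> (arg x k n)) sums g x
      \<and> (g has_real_derivative S'_inf x k) (at x within {0..1})"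
    using has_field_derivative_series[OF convex_real_interval(5)
        has_field_derivative_at_within[OF S_term_has_derivative] uniform x summable_S_term[OF k x]]
    by blast
  have g_eq: "g y = S_inf b \<gamma> \<phi> y k" if "y \<in> {0..1}" for y
    using g that by (simp add: S_inf_eq_suminf sums_iff)
  from g x have "(g has_real_derivative S'_inf x k) (at x within {0..1})"
    by blast
  then show ?thesis
    by (rule has_field_derivative_transform_within[OF _ zero_less_one x]) (rule g_eq)
qed

section \<open>Non-degeneracy from condition (H)\<close>

lemma eventually_q_power_less: "0 < e \<Longrightarrow> \<forall>\<^sub>F m in sequentially. C * q ^ m < e"
proof (rule order_tendstoD(2))
  show "(\<lambda>m. C * q ^ m) \<longlonglongrightarrow> 0"
    using tendsto_mult[OF tendsto_const LIMSEQ_power_zero, of q C] q_pos q_less_1 by simp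
qed

(* The margins 2 M1 q^m and 4 M1 q^m absorb the error bound of S'_fin_prefix_approx. *)
definition separating :: "nat \<Rightarrow> real \<Rightarrow> (nat \<Rightarrow> nat) \<Rightarrow> (nat \<Rightarrow> nat) \<Rightarrow> bool" where
  "separating m x k k' \<longleftrightarrow>
     2 * M\<^sub>1 * q ^ m < \<bar>S'_part x k m\<bar> \<and> 2 * M\<^sub>1 * q ^ m < \<bar>S'_part x k' m\<bar> \<and>
     4 * M\<^sub>1 * q ^ m < \<bar>S'_part x k m - S'_part x k' m\<bar>"

lemma S'_inf_trichotomy:
  assumes k: "seq_ok b k" and k': "seq_ok b k'" and x: "x \<in> {0..1}"
    and not_separating: "\<And>m. \<not> separating m x k k'"
  shows "S'_inf x k = 0 \<or> S'_inf x k' = 0 \<or> S'_inf x k = S'_inf x k'"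
proof (rule ccontr)
  let ?\<delta> = "min \<bar>S'_inf x k\<bar> (min \<bar>S'_inf x k'\<bar> \<bar>S'_inf x k - S'_inf x k'\<bar>)"
  assume "\<not> ?thesis"
  then have "0 < ?\<delta>"
    by auto
  from eventually_q_power_less[OF this, of "6 * M\<^sub>1"] obtain m where m: "6 * M\<^sub>1 * q ^ m < ?\<delta>"
    unfolding eventually_sequentially by blast
  define \<epsilon> where "\<epsilon> = M\<^sub>1 * q ^ m"
  have \<epsilon>: "0 \<le> \<epsilon>" "6 * \<epsilon> < \<bar>S'_inf x k\<bar>" "6 * \<epsilon> < \<bar>S'_inf x k'\<bar>"
    "6 * \<epsilon> < \<bar>S'_inf x k - S'_inf x k'\<bar>"
    using m M\<^sub>1_nonneg q_pos unfolding \<epsilon>_def by auto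
  have tail: "\<bar>S'_inf x k - S'_part x k m\<bar> \<le> \<epsilon>" "\<bar>S'_inf x k' - S'_part x k' m\<bar> \<le> \<epsilon>"
    using S'_inf_tail[OF k x] S'_inf_tail[OF k' x] unfolding \<epsilon>_def by auto
  have "2 * \<epsilon> < \<bar>S'_part x k m\<bar>"
    using \<epsilon>(1,2) tail(1) by linarith
  moreover have "2 * \<epsilon> < \<bar>S'_part x k' m\<bar>"
    using \<epsilon>(1,3) tail(2) by linarith
  moreover have "4 * \<epsilon> < \<bar>S'_part x k m - S'_part x k' m\<bar>"
    using \<epsilon>(1,4) tail by linarith
  ultimately have "separating m x k k'"
    unfolding separating_def \<epsilon>_def by (simp add: mult.assoc)
  with not_separating show False
    by blast
qed

(* Prepending m letters scales differences of S'_inf by q^m, which pushes them below the only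
   possible non-zero difference |v| of values at x. *)
lemma S'_inf_branch_eq:
  assumes x: "x \<in> {0..1}" and two_values: "\<And>k. seq_ok b k \<Longrightarrow> S'_inf x k = 0 \<or> S'_inf x k = v"
    and small: "2 * M\<^sub>1 * q ^ m < \<bar>v\<bar>"
    and w: "seq_ok b w" and p: "seq_ok b p" and p': "seq_ok b p'"
  shows "S'_inf (branch x w m) p = S'_inf (branch x w m) p'"
proof -
  let ?y = "branch x w m"
  have y: "?y \<in> {0..1}"
    by (rule branch_in_unit[OF w x])
  have diff: "S'_inf x (prepend m w p) - S'_inf x (prepend m w p') = q ^ m * (S'_inf ?y p - S'_inf ?y p')"
    using S'_inf_prepend[OF w p x] S'_inf_prepend[OF w p' x] by (simp add: algebra_simps)
  have "\<bar>S'_inf ?y p - S'_inf ?y p'\<bar> \<le> 2 * M\<^sub>1"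
    using S'_inf_bound[OF p y] S'_inf_bound[OF p' y] by linarith
  then have "\<bar>q ^ m * (S'_inf ?y p - S'_inf ?y p')\<bar> \<le> 2 * M\<^sub>1 * q ^ m"
    using q_pos by (simp add: abs_mult mult_left_mono mult.commute)
  with small diff have "\<bar>S'_inf x (prepend m w p) - S'_inf x (prepend m w p')\<bar> < \<bar>v\<bar>"
    by simp
  moreover have "S'_inf x (prepend m w p) \<in> {0, v}" "S'_inf x (prepend m w p') \<in> {0, v}"
    using two_values seq_ok_prepend[OF w p] seq_ok_prepend[OF w p'] by blast+
  ultimately have "S'_inf x (prepend m w p) = S'_inf x (prepend m w p')"
    by (auto simp: abs_minus_commute)
  then show ?thesis
    using diff q_pos by simp
qed

lemma branch_digit: "N < b ^ m \<Longrightarrow> branch x (digit b N) m = (x + real N) / real b ^ m"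
  by (simp add: branch_def sum_digit)

lemma branch_floor_digits_tendsto:
  assumes x: "x \<in> {0..<1}"
  shows "(\<lambda>m. branch x (digit b (nat \<lfloor>x * real b ^ m\<rfloor>)) m) \<longlonglongrightarrow> x"
proof (rule LIM_zero_cancel, rule Lim_null_comparison)
  show "(\<lambda>m. (1 / real b) ^ m) \<longlonglongrightarrow> 0"
    using b_ge_2 by (intro LIMSEQ_power_zero) simp
  show "\<forall>\<^sub>F m in sequentially. norm (branch x (digit b (nat \<lfloor>x * real b ^ m\<rfloor>)) m - x) \<le> (1 / real b) ^ m"
  proof (intro always_eventually allI)
    fix m
    define N where "N = nat \<lfloor>x * real b ^ m\<rfloor>"
    have N: "N < b ^ m" "real N \<le> x * real b ^ m" "x * real b ^ m < real N + 1"
      using floor_scaled_bounds[of x b m] x b_pos unfolding N_def by auto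
    have "branch x (digit b N) m - x = (x + real N - x * real b ^ m) / real b ^ m"
      using N(1) b_pos by (simp add: branch_digit field_simps)
    also have "\<bar>\<dots>\<bar> \<le> 1 / real b ^ m"
      using N x b_pos by (simp add: abs_le_iff divide_right_mono)
    finally show "norm (branch x (digit b N) m - x) \<le> (1 / real b) ^ m"
      by (simp add: power_one_over)
  qed
qed

lemma S'_inf_const_of_trichotomy:
  assumes x: "x \<in> {0..<1}"
    and trichotomy: "\<And>k k'. seq_ok b k \<Longrightarrow> seq_ok b k' \<Longrightarrow>
      S'_inf x k = 0 \<or> S'_inf x k' = 0 \<or> S'_inf x k = S'_inf x k'"
    and k\<^sub>1: "seq_ok b k\<^sub>1" and k\<^sub>2: "seq_ok b k\<^sub>2"
  shows "S'_inf x k\<^sub>1 = S'_inf x k\<^sub>2"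
proof -
  obtain v where v: "\<And>k. seq_ok b k \<Longrightarrow> S'_inf x k = 0 \<or> S'_inf x k = v"
    using trichotomy_imp_two_values[of "Collect (seq_ok b)" "S'_inf x"] trichotomy by auto
  show ?thesis
  proof (cases "v = 0")
    case True
    then show ?thesis
      using v[OF k\<^sub>1] v[OF k\<^sub>2] by simp
  next
    case False
    define y where "y m = branch x (digit b (nat \<lfloor>x * real b ^ m\<rfloor>)) m" for m
    have y_in_unit: "y m \<in> {0..1}" for m
      unfolding y_def using x b_pos by (intro branch_in_unit seq_ok_digit) auto
    have "\<forall>\<^sub>F m in sequentially. 2 * M\<^sub>1 * q ^ m < \<bar>v\<bar>"
      using False by (intro eventually_q_power_less) simp
    then have "\<forall>\<^sub>F m in sequentially. S'_inf (y m) k\<^sub>1 - S'_inf (y m) k\<^sub>2 = 0"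
    proof (rule eventually_mono)
      fix m assume "2 * M\<^sub>1 * q ^ m < \<bar>v\<bar>"
      from S'_inf_branch_eq[OF _ v this _ k\<^sub>1 k\<^sub>2] x b_pos
      show "S'_inf (y m) k\<^sub>1 - S'_inf (y m) k\<^sub>2 = 0"
        by (simp add: y_def seq_ok_digit)
    qed
    then have "(\<lambda>m. S'_inf (y m) k\<^sub>1 - S'_inf (y m) k\<^sub>2) \<longlonglongrightarrow> 0"
      by (rule tendsto_eventually)
    moreover have "(\<lambda>m. S'_inf (y m) k\<^sub>1 - S'_inf (y m) k\<^sub>2) \<longlonglongrightarrow> S'_inf x k\<^sub>1 - S'_inf x k\<^sub>2"
      using x y_in_unit unfolding y_def
      by (intro tendsto_diff continuous_on_tendsto_compose[OF continuous_on_S'_inf]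
          branch_floor_digits_tendsto k\<^sub>1 k\<^sub>2 always_eventually) auto
    ultimately show ?thesis
      using LIMSEQ_unique by fastforce
  qed
qed

lemma S_inf_diff_const:
  assumes k: "seq_ok b k" and k': "seq_ok b k'" and x: "x \<in> {0..1}"
    and S'_eq: "\<And>y. y \<in> {0..1} \<Longrightarrow> S'_inf y k = S'_inf y k'"
  shows "S_inf b \<gamma> \<phi> x k - S_inf b \<gamma> \<phi> x k' = S_inf b \<gamma> \<phi> 0 k - S_inf b \<gamma> \<phi> 0 k'"
proof -
  have "((\<lambda>x. S_inf b \<gamma> \<phi> x k - S_inf b \<gamma> \<phi> x k') has_real_derivative 0) (at y within {0..1})"
    if "y \<in> {0..1}" for y
    using DERIV_diff[OF S_inf_has_derivative[OF k that] S_inf_has_derivative[OF k' that]] S'_eq[OF that]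
    by simp
  then obtain c where "\<forall>y\<in>{0..1}. S_inf b \<gamma> \<phi> y k - S_inf b \<gamma> \<phi> y k' = c"
    using has_field_derivative_zero_constant[OF convex_real_interval(5)] by blast
  then show ?thesis
    using x by simp
qed

lemma S_inf_shift: "S_inf b \<gamma> \<phi> 1 (digit b N) = S_inf b \<gamma> \<phi> 0 (digit b (Suc N))"
  unfolding S_inf_eq_suminf
proof (intro arg_cong[where f = suminf] ext)
  fix n
  define P where "P = b ^ (n + 1)"
  have P_pos: "0 < P"
    using b_ge_2 by (simp add: P_def)
  have arg_1: "arg 1 (digit b N) n = (1 + real (N mod P)) / real P"
    and arg_0: "arg 0 (digit b (Suc N)) n = real (Suc N mod P) / real P"
    unfolding arg_eq_branch branch_def sum_digit P_def by simp_all
  have "\<phi> (arg 1 (digit b N) n) = \<phi> (arg 0 (digit b (Suc N)) n)"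
  proof (cases "Suc (N mod P) = P")
    case True
    then have "arg 1 (digit b N) n = 0 + 1" and "arg 0 (digit b (Suc N)) n = 0"
      unfolding arg_1 arg_0 using P_pos mod_Suc[of N P] by (auto simp: field_simps)
    then show ?thesis
      using \<phi>_periodic[of 0] by simp
  next
    case False
    then show ?thesis
      unfolding arg_1 arg_0 using mod_Suc[of N P] by simp
  qed
  then show "\<gamma> ^ n * \<phi> (arg 1 (digit b N) n) = \<gamma> ^ n * \<phi> (arg 0 (digit b (Suc N)) n)"
    by simp
qed

lemma S_inf_digit_linear:
  assumes const: "\<And>x k k'. x \<in> {0..1} \<Longrightarrow> seq_ok b k \<Longrightarrow> seq_ok b k' \<Longrightarrow>
      S_inf b \<gamma> \<phi> x k - S_inf b \<gamma> \<phi> x k' = S_inf b \<gamma> \<phi> 0 k - S_inf b \<gamma> \<phi> 0 k'"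
  shows "S_inf b \<gamma> \<phi> 0 (digit b N) = S_inf b \<gamma> \<phi> 0 (digit b 0)
      + real N * (S_inf b \<gamma> \<phi> 1 (digit b 0) - S_inf b \<gamma> \<phi> 0 (digit b 0))"
proof (induction N)
  case (Suc N)
  have "S_inf b \<gamma> \<phi> 1 (digit b N) - S_inf b \<gamma> \<phi> 1 (digit b 0)
      = S_inf b \<gamma> \<phi> 0 (digit b N) - S_inf b \<gamma> \<phi> 0 (digit b 0)"
    using b_pos by (intro const seq_ok_digit) auto
  then show ?case
    using Suc.IH S_inf_shift[of N] by (simp add: algebra_simps)
qed simp

lemma S_inf_diff_not_const:
  assumes H: "cond_H b \<gamma> \<phi>"
  shows "\<exists>x\<in>{0..1}. \<exists>k k'. seq_ok b k \<and> seq_ok b k' \<and>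
      S_inf b \<gamma> \<phi> x k - S_inf b \<gamma> \<phi> x k' \<noteq> S_inf b \<gamma> \<phi> 0 k - S_inf b \<gamma> \<phi> 0 k'"
proof (rule ccontr)
  let ?S = "S_inf b \<gamma> \<phi>"
  assume "\<not> ?thesis"
  then have const: "\<And>x k k'. x \<in> {0..1} \<Longrightarrow> seq_ok b k \<Longrightarrow> seq_ok b k' \<Longrightarrow>
      ?S x k - ?S x k' = ?S 0 k - ?S 0 k'"
    by blast
  have digit_ok: "seq_ok b (digit b N)" for N
    using b_pos by (simp add: seq_ok_digit)
  have "?S 1 (digit b 0) - ?S 0 (digit b 0) = 0"
  proof (rule bounded_arithmetic_progression)
    fix N
    have "?S 0 (digit b N) = ?S 0 (digit b 0) + real N * (?S 1 (digit b 0) - ?S 0 (digit b 0))"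
      by (rule S_inf_digit_linear[OF const])
    from this S_inf_bound[OF digit_ok[of N], of 0]
    show "\<bar>?S 0 (digit b 0) + real N * (?S 1 (digit b 0) - ?S 0 (digit b 0))\<bar> \<le> M\<^sub>0 / (1 - \<gamma>)"
      by simp
  qed
  then have "?S x (digit b 1) - ?S x (digit b 0) = 0" if "x \<in> {0..1}" for x
    using const[OF that digit_ok digit_ok] S_inf_digit_linear[OF const, of 1] by simp
  moreover have "digit b 0 \<noteq> digit b 1"
  proof
    assume "digit b 0 = digit b 1"
    then have "digit b 0 0 = digit b 1 0"
      by simp
    with b_ge_2 show False
      by (simp add: digit_def)
  qed
  with H digit_ok obtain x where "x \<in> {0..1}" "?S x (digit b 1) - ?S x (digit b 0) \<noteq> 0"
    unfolding cond_H_def by blast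
  ultimately show False
    by blast
qed

lemma exists_separating:
  assumes "cond_H b \<gamma> \<phi>"
  shows "\<exists>m x k k'. x \<in> {0<..<1} \<and> seq_ok b k \<and> seq_ok b k' \<and> separating m x k k'"
proof (rule ccontr)
  assume none: "\<not> ?thesis"
  have interior_eq: "S'_inf x k - S'_inf x k' = 0"
    if x: "x \<in> {0<..<1}" and k: "seq_ok b k" and k': "seq_ok b k'" for x k k'
  proof -
    have "S'_inf x p = 0 \<or> S'_inf x p' = 0 \<or> S'_inf x p = S'_inf x p'"
      if "seq_ok b p" "seq_ok b p'" for p p'
      using none x that by (intro S'_inf_trichotomy) auto
    then have "S'_inf x k = S'_inf x k'"
      using x by (intro S'_inf_const_of_trichotomy[OF _ _ k k']) auto
    then show ?thesis
      by simp
  qed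
  have S'_eq: "S'_inf x k = S'_inf x k'"
    if x: "x \<in> {0..1}" and k: "seq_ok b k" and k': "seq_ok b k'" for x k k'
  proof -
    have "continuous_on (closure {0<..<1}) (\<lambda>x. S'_inf x k - S'_inf x k')"
      using continuous_on_diff[OF continuous_on_S'_inf[OF k] continuous_on_S'_inf[OF k']] by simp
    from continuous_constant_on_closure[OF this interior_eq[OF _ k k']] x
    show ?thesis
      by simp
  qed
  obtain x k k' where "x \<in> {0..1}" "seq_ok b k" "seq_ok b k'"
    and "S_inf b \<gamma> \<phi> x k - S_inf b \<gamma> \<phi> x k' \<noteq> S_inf b \<gamma> \<phi> 0 k - S_inf b \<gamma> \<phi> 0 k'"
    using S_inf_diff_not_const[OF assms] by blast
  with S_inf_diff_const S'_eq show False
    by blast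
qed

section \<open>Separation on a cylinder\<close>

lemma S'_fin_eq_S'_part: "S'_fin b \<gamma> \<phi> x i = S'_part x (word_seq i) (length i)"
proof -
  have "(\<lambda>y. S_fin b \<gamma> \<phi> y i) = (\<lambda>y. S_part y (word_seq i) (length i))"
    unfolding S_fin_def S_part_def arg_def
    by (intro ext sum.cong refl arg_cong[where f = "\<lambda>u. \<gamma> ^ _ * \<phi> u"])
      (auto simp: word_seq_def intro!: sum.cong)
  then show ?thesis
    unfolding S'_fin_def using DERIV_imp_deriv[OF S_part_has_derivative] by simp
qed

lemma S'_fin_prefix_approx:
  assumes k: "seq_ok b k" and i: "word_ok b i" and prefix: "prefix (map k [0..<t]) i"
    and m: "m \<le> t" and x: "x \<in> {0..1}"
  shows "\<bar>S'_fin b \<gamma> \<phi> x i - S'_part x k m\<bar> \<le> 2 * M\<^sub>1 * q ^ m"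
proof -
  let ?k = "word_seq i"
  have k_ok: "seq_ok b ?k"
    using i b_pos by (simp add: seq_ok_word_seq)
  have "m \<le> length i"
    using m prefix_length_le[OF prefix] by simp
  then have "M\<^sub>1 * q ^ length i \<le> M\<^sub>1 * q ^ m"
    using M\<^sub>1_nonneg q_pos q_less_1 by (intro mult_left_mono power_decreasing) auto
  moreover have "S'_part x k m = S'_part x ?k m"
    using m by (intro S'_part_cong) (simp add: word_seq_prefix[OF prefix])
  ultimately show ?thesis
    using S'_inf_tail[OF k_ok x, of m] S'_inf_tail[OF k_ok x, of "length i"]
    unfolding S'_fin_eq_S'_part by linarith
qed

lemma separating_near:
  assumes "separating m x\<^sub>0 k k'"
  obtains \<epsilon> \<Delta> where "0 < \<epsilon>" "0 < \<Delta>"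
    and "\<And>z. \<bar>z - x\<^sub>0\<bar> < \<epsilon> \<Longrightarrow> 2 * M\<^sub>1 * q ^ m + \<Delta> < \<bar>S'_part z k m\<bar>
      \<and> 2 * M\<^sub>1 * q ^ m + \<Delta> < \<bar>S'_part z k' m\<bar>
      \<and> 4 * M\<^sub>1 * q ^ m + \<Delta> < \<bar>S'_part z k m - S'_part z k' m\<bar>"
proof -
  define g where "g z = min (\<bar>S'_part z k m\<bar> - 2 * M\<^sub>1 * q ^ m)
    (min (\<bar>S'_part z k' m\<bar> - 2 * M\<^sub>1 * q ^ m) (\<bar>S'_part z k m - S'_part z k' m\<bar> - 4 * M\<^sub>1 * q ^ m))" for z
  have "isCont g x\<^sub>0"
    unfolding g_def by (intro continuous_intros isCont_S'_part)
  then have "(g \<longlongrightarrow> g x\<^sub>0) (nhds x\<^sub>0)"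
    by (simp add: isCont_def tendsto_at_iff_tendsto_nhds)
  moreover have g_pos: "0 < g x\<^sub>0"
    using assms unfolding g_def separating_def by simp
  then have "g x\<^sub>0 / 2 < g x\<^sub>0"
    by simp
  ultimately have "\<forall>\<^sub>F z in nhds x\<^sub>0. g x\<^sub>0 / 2 < g z"
    by (rule order_tendstoD(1))
  then obtain \<epsilon> where "0 < \<epsilon>" and \<epsilon>: "\<And>z. dist z x\<^sub>0 < \<epsilon> \<Longrightarrow> g x\<^sub>0 / 2 < g z"
    unfolding eventually_nhds_metric by blast
  moreover have "0 < g x\<^sub>0 / 2"
    using g_pos by simp
  moreover have "2 * M\<^sub>1 * q ^ m + \<Delta> < \<bar>S'_part z k m\<bar>
      \<and> 2 * M\<^sub>1 * q ^ m + \<Delta> < \<bar>S'_part z k' m\<bar>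
      \<and> 4 * M\<^sub>1 * q ^ m + \<Delta> < \<bar>S'_part z k m - S'_part z k' m\<bar>"
    if "\<Delta> < g z" for z \<Delta>
    using that unfolding g_def by auto
  ultimately show ?thesis
    using that[of \<epsilon> "g x\<^sub>0 / 2"] by (simp add: dist_real_def)
qed

lemma cylinder_separation:
  assumes x\<^sub>0: "x\<^sub>0 \<in> {0<..<1}" and k: "seq_ok b k" and k': "seq_ok b k'"
    and separating: "separating m x\<^sub>0 k k'"
  shows "\<exists>t::nat. real t > t\<^sub>0 \<and> (\<exists>\<Delta>\<^sub>1>0. \<exists>h h' a.
           length h = t \<and> length h' = t \<and> length a = t \<and>
           word_ok b h \<and> word_ok b h' \<and> word_ok b a \<and>
           (\<forall>z\<in>I_word b a. \<forall>i j. word_ok b i \<and> word_ok b j \<and> i \<noteq> [] \<and> j \<noteq> [] \<and>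
               prefix h i \<and> prefix h' j \<longrightarrow>
               \<bar>S'_fin b \<gamma> \<phi> z i\<bar> > \<Delta>\<^sub>1 \<and> \<bar>S'_fin b \<gamma> \<phi> z j\<bar> > \<Delta>\<^sub>1 \<and>
               \<bar>S'_fin b \<gamma> \<phi> z i - S'_fin b \<gamma> \<phi> z j\<bar> > \<Delta>\<^sub>1))"
proof -
  obtain \<epsilon> \<Delta> where \<epsilon>: "0 < \<epsilon>" and \<Delta>: "0 < \<Delta>"
    and near: "\<And>z. \<bar>z - x\<^sub>0\<bar> < \<epsilon> \<Longrightarrow> 2 * M\<^sub>1 * q ^ m + \<Delta> < \<bar>S'_part z k m\<bar>
      \<and> 2 * M\<^sub>1 * q ^ m + \<Delta> < \<bar>S'_part z k' m\<bar>
      \<and> 4 * M\<^sub>1 * q ^ m + \<Delta> < \<bar>S'_part z k m - S'_part z k' m\<bar>"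
    using separating_near[OF separating] by blast
  obtain t where t: "m \<le> t" "t\<^sub>0 < real t" "1 / real b ^ t < \<epsilon>"
    using exists_fine_scale[OF b_ge_2 \<epsilon>] .
  have "0 \<le> x\<^sub>0" "x\<^sub>0 < 1" "0 < b"
    using x\<^sub>0 b_ge_2 by auto
  from I_word_floor_digits[where t = t, OF this]
  obtain a where a: "length a = t" "word_ok b a"
    and a_near: "\<And>z. z \<in> I_word b a \<Longrightarrow> z \<in> {0..1} \<and> \<bar>z - x\<^sub>0\<bar> < 1 / real b ^ t"
    by blast
  define h where "h = map k [0..<t]"
  define h' where "h' = map k' [0..<t]"
  have h: "length h = t" "length h' = t" "word_ok b h" "word_ok b h'"
    using k k' by (auto simp: h_def h'_def word_ok_def seq_ok_def)
  have "\<Delta> < \<bar>S'_fin b \<gamma> \<phi> z i\<bar> \<and> \<Delta> < \<bar>S'_fin b \<gamma> \<phi> z j\<bar>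
      \<and> \<Delta> < \<bar>S'_fin b \<gamma> \<phi> z i - S'_fin b \<gamma> \<phi> z j\<bar>"
    if z: "z \<in> I_word b a" and i: "word_ok b i" "prefix h i" and j: "word_ok b j" "prefix h' j" for z i j
  proof -
    define \<eta> where "\<eta> = M\<^sub>1 * q ^ m"
    have z_unit: "z \<in> {0..1}" and "\<bar>z - x\<^sub>0\<bar> < \<epsilon>"
      using a_near[OF z] t(3) by auto
    from near[OF this(2)] have "2 * \<eta> + \<Delta> < \<bar>S'_part z k m\<bar>" "2 * \<eta> + \<Delta> < \<bar>S'_part z k' m\<bar>"
      "4 * \<eta> + \<Delta> < \<bar>S'_part z k m - S'_part z k' m\<bar>"
      unfolding \<eta>_def by (simp_all add: mult.assoc)
    moreover have "\<bar>S'_fin b \<gamma> \<phi> z i - S'_part z k m\<bar> \<le> 2 * \<eta>"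
      "\<bar>S'_fin b \<gamma> \<phi> z j - S'_part z k' m\<bar> \<le> 2 * \<eta>"
      using S'_fin_prefix_approx[OF k i(1) i(2)[unfolded h_def] t(1) z_unit]
        S'_fin_prefix_approx[OF k' j(1) j(2)[unfolded h'_def] t(1) z_unit]
      unfolding \<eta>_def by (simp_all add: mult.assoc)
    ultimately show ?thesis
      by linarith
  qed
  with t(2) \<Delta> a h show ?thesis
    by blast
qed

end

theorem theorem6p1:
  fixes b :: nat and \<gamma> :: real and \<phi> :: "real \<Rightarrow> real" and \<alpha> :: real
  assumes hb: "b \<ge> 2"
    and h\<gamma>: "0 < \<gamma>" "\<gamma> < 1"
    and han: "real_analytic \<phi>"
    and hper: "Z_periodic \<phi>"
    and hH: "cond_H b \<gamma> \<phi>"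
    and h\<alpha>: "AE x in lborel. x \<in> {0..1} \<longrightarrow> exact_dimensional (m_meas b \<gamma> \<phi> x) \<alpha>"
    and h\<alpha>lt: "\<alpha> < min 1 (ln (real b) / ln (1 / \<gamma>))"
  shows "\<forall>t0>0. \<exists>t::nat. real t > t0 \<and> (\<exists>\<Delta>1>0. \<exists>h h' a.
           length h = t \<and> length h' = t \<and> length a = t \<and>
           word_ok b h \<and> word_ok b h' \<and> word_ok b a \<and>
           (\<forall>z\<in>I_word b a. \<forall>i j. word_ok b i \<and> word_ok b j \<and> i \<noteq> [] \<and> j \<noteq> [] \<and>
               prefix h i \<and> prefix h' j \<longrightarrow>
               \<bar>S'_fin b \<gamma> \<phi> z i\<bar> > \<Delta>1 \<and> \<bar>S'_fin b \<gamma> \<phi> z j\<bar> > \<Delta>1 \<and>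
               \<bar>S'_fin b \<gamma> \<phi> z i - S'_fin b \<gamma> \<phi> z j\<bar> > \<Delta>1))"
proof -
  note \<phi>_C1 = real_analytic_has_continuous_deriv[OF han]
  have "continuous_on {0..1} \<phi>" "continuous_on {0..1} (deriv \<phi>)"
    using DERIV_isCont[OF \<phi>_C1(1)] \<phi>_C1(2) by (simp_all add: continuous_at_imp_continuous_on)
  then obtain M\<^sub>0 M\<^sub>1 where "\<And>x. x \<in> {0..1} \<Longrightarrow> norm (\<phi> x) \<le> M\<^sub>0"
    and "\<And>x. x \<in> {0..1} \<Longrightarrow> norm (deriv \<phi> x) \<le> M\<^sub>1"
    by (elim continuous_on_compact_bound[OF compact_Icc]) blast
  then interpret weierstrass_type_function b \<gamma> \<phi> "deriv \<phi>" M\<^sub>0 M\<^sub>1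
    using hb h\<gamma> \<phi>_C1 hper by unfold_locales (simp_all add: Z_periodic_def)
  obtain m x\<^sub>0 k k' where "x\<^sub>0 \<in> {0<..<1}" "seq_ok b k" "seq_ok b k'" "separating m x\<^sub>0 k k'"
    using exists_separating[OF hH] by blast
  then show ?thesis
    by (intro allI impI cylinder_separation)
qed

end
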